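(* Let $(X,\tau)$ be a topological space and let $\mathcal{F}:\mathcal{O}(X)^{\mathrm{op}}\to\mathbf{Set}$ be a stonean sheaf with $\mathcal{F}(X)\neq\emptyset$. Then $\mathcal{F}(U)=\{f\restriction U: f\in\mathcal{F}(X)\}$ for all $U\in\mathcal{O}(X)$.
   Context: $\mathcal{O}(X)$ is the set of non-empty open subsets of $X$ ordered by inclusion; a presheaf is a functor $\mathcal{F}:\mathcal{O}(X)^{\mathrm{op}}\to\mathbf{Set}$ and $f\restriction U=\mathcal{F}(U\subseteq V)(f)$ for $f\in\mathcal{F}(V)$. A family $\{f_i\}$ with $f_i\in\mathcal{F}(U_i)$ is compatible if $f_i\restriction W=f_j\restriction W$ for all $i,j$ and non-empty open $W\subseteq U_i\cap U_j$; a collation on $U$ is $f\in\mathcal{F}(U)$ with $f\restriction W=f_i\restriction W$ for all $i$ and non-empty open $W\subseteq U\cap U_i$. $\{U_i\}$ is a dense covering of $U$ if every non-empty open $V\subseteq U$ meets some $U_i$ in a non-empty open set. $\mathcal{F}$ is a stonean sheaf if every compatible family indexed by a dense covering of $U$ has a unique collation on $U$. *)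

theory Defs
  imports "HOL-Analysis.Analysis"
begin

definition opens :: "'a topology \<Rightarrow> 'a set set" where
  "opens X = {U. openin X U \<and> U \<noteq> {}}"

definition presheaf :: "'a topology \<Rightarrow> ('a set \<Rightarrow> 'b set) \<Rightarrow> ('a set \<Rightarrow> 'a set \<Rightarrow> 'b \<Rightarrow> 'b) \<Rightarrow> bool" where
  "presheaf X F res \<longleftrightarrow>
     (\<forall>V\<in>opens X. \<forall>U\<in>opens X. U \<subseteq> V \<longrightarrow> (\<forall>f\<in>F V. res V U f \<in> F U)) \<and>
     (\<forall>U\<in>opens X. \<forall>f\<in>F U. res U U f = f) \<and>
     (\<forall>U\<in>opens X. \<forall>V\<in>opens X. \<forall>W\<in>opens X. W \<subseteq> V \<longrightarrow> V \<subseteq> U \<longrightarrow>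
        (\<forall>f\<in>F U. res V W (res U V f) = res U W f))"

definition compatible_family :: "'a topology \<Rightarrow> ('a set \<Rightarrow> 'b set) \<Rightarrow> ('a set \<Rightarrow> 'a set \<Rightarrow> 'b \<Rightarrow> 'b)
    \<Rightarrow> 'i set \<Rightarrow> ('i \<Rightarrow> 'a set) \<Rightarrow> ('i \<Rightarrow> 'b) \<Rightarrow> bool" where
  "compatible_family X F res I Us fs \<longleftrightarrow>
     (\<forall>i\<in>I. Us i \<in> opens X \<and> fs i \<in> F (Us i)) \<and>
     (\<forall>i\<in>I. \<forall>j\<in>I. \<forall>W\<in>opens X. W \<subseteq> Us i \<inter> Us j \<longrightarrow> res (Us i) W (fs i) = res (Us j) W (fs j))"

definition collation :: "'a topology \<Rightarrow> ('a set \<Rightarrow> 'b set) \<Rightarrow> ('a set \<Rightarrow> 'a set \<Rightarrow> 'b \<Rightarrow> 'b)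
    \<Rightarrow> 'i set \<Rightarrow> ('i \<Rightarrow> 'a set) \<Rightarrow> ('i \<Rightarrow> 'b) \<Rightarrow> 'a set \<Rightarrow> 'b \<Rightarrow> bool" where
  "collation X F res I Us fs U f \<longleftrightarrow>
     f \<in> F U \<and>
     (\<forall>i\<in>I. \<forall>W\<in>opens X. W \<subseteq> U \<inter> Us i \<longrightarrow> res U W f = res (Us i) W (fs i))"

definition dense_covering :: "'a topology \<Rightarrow> 'i set \<Rightarrow> ('i \<Rightarrow> 'a set) \<Rightarrow> 'a set \<Rightarrow> bool" where
  "dense_covering X I Us U \<longleftrightarrow>
     (\<forall>i\<in>I. Us i \<in> opens X) \<and>
     (\<forall>V\<in>opens X. V \<subseteq> U \<longrightarrow> (\<exists>i\<in>I. V \<inter> Us i \<in> opens X))"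

text \<open>Families are indexed by sets of type 'a set (enough: repeated open sets in a
  compatible family carry equal sections).\<close>
definition stonean_sheaf :: "'a topology \<Rightarrow> ('a set \<Rightarrow> 'b set) \<Rightarrow> ('a set \<Rightarrow> 'a set \<Rightarrow> 'b \<Rightarrow> 'b) \<Rightarrow> bool" where
  "stonean_sheaf X F res \<longleftrightarrow> presheaf X F res \<and>
     (\<forall>U\<in>opens X. \<forall>(I::'a set set) Us fs.
        dense_covering X I Us U \<and> compatible_family X F res I Us fs \<longrightarrow>
        (\<exists>!f. collation X F res I Us fs U f))"

end

theory Submission
  imports Defs
begin

text \<open>A section \<open>g\<close> over \<open>U\<close> extends to all of \<open>X\<close>: together with \<open>U\<close>, its exterior
  \<open>V = X - cl U\<close> is a dense covering of \<open>X\<close>, because a non-empty open set missing \<open>U\<close>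
  also misses its closure. As \<open>U\<close> and \<open>V\<close> are disjoint, \<open>g\<close> and the restriction to \<open>V\<close>
  of any global section form a compatible family, and its collation restricts to \<open>g\<close> on \<open>U\<close>.\<close>

lemma opens_subset_topspace: "U \<in> opens X \<Longrightarrow> U \<subseteq> topspace X"
  by (simp add: opens_def openin_subset)

lemma opens_topspace: "U \<in> opens X \<Longrightarrow> topspace X \<in> opens X"
  using opens_subset_topspace unfolding opens_def by blast

lemma presheaf_res_in:
  "\<lbrakk>presheaf X F res; U \<in> opens X; V \<in> opens X; U \<subseteq> V; f \<in> F V\<rbrakk> \<Longrightarrow> res V U f \<in> F U"
  by (simp add: presheaf_def)

lemma presheaf_res_id: "\<lbrakk>presheaf X F res; U \<in> opens X; f \<in> F U\<rbrakk> \<Longrightarrow> res U U f = f"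
  by (simp add: presheaf_def)

lemma stonean_sheaf_collation_exists:
  fixes X :: "'a topology" and I :: "'a set set"
  assumes "stonean_sheaf X F res" "U \<in> opens X"
    and "dense_covering X I Us U" "compatible_family X F res I Us fs"
  shows "\<exists>f. collation X F res I Us fs U f"
  using assms unfolding stonean_sheaf_def by blast

lemma dense_covering_with_exterior:
  assumes U: "openin X U"
  defines "V \<equiv> topspace X - X closure_of U"
  shows "dense_covering X {S \<in> {U, V}. S \<noteq> {}} id (topspace X)"
  unfolding dense_covering_def
proof (intro conjI ballI impI)
  have "openin X V"
    unfolding V_def by (simp add: openin_diff)
  then show "id S \<in> opens X" if "S \<in> {S \<in> {U, V}. S \<noteq> {}}" for S
    using that U by (auto simp: opens_def)
next
  fix W assume W: "W \<in> opens X"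
  then have W_open: "openin X W" and W_ne: "W \<noteq> {}"
    by (simp_all add: opens_def)
  show "\<exists>S\<in>{S \<in> {U, V}. S \<noteq> {}}. W \<inter> id S \<in> opens X"
  proof (cases "W \<inter> U = {}")
    case True
    then have "W \<inter> X closure_of U = {}"
      using W_open by (simp add: openin_Int_closure_of_eq_empty)
    then have "W \<subseteq> V"
      using openin_subset[OF W_open] unfolding V_def by blast
    then have "W \<inter> V = W" "V \<noteq> {}"
      using W_ne by blast+
    then show ?thesis
      using W by auto
  next
    case False
    then have "W \<inter> U \<in> opens X"
      using W_open U by (simp add: opens_def openin_Int)
    then show ?thesis
      using False by auto
  qed
qed

lemma compatible_family_disjoint:
  assumes "\<forall>i\<in>I. Us i \<in> opens X \<and> fs i \<in> F (Us i)" and "disjoint_family_on Us I"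
  shows "compatible_family X F res I Us fs"
  unfolding compatible_family_def
proof (intro conjI ballI impI)
  fix i j W assume ij: "i \<in> I" "j \<in> I" and W: "W \<in> opens X" "W \<subseteq> Us i \<inter> Us j"
  show "res (Us i) W (fs i) = res (Us j) W (fs j)"
  proof (cases "i = j")
    case False
    then have "W = {}"
      using ij W(2) assms(2) unfolding disjoint_family_on_def by blast
    then show ?thesis
      using W(1) by (simp add: opens_def)
  qed simp
qed (use assms(1) in blast)+

lemma stonean_sheaf_extends_section:
  assumes sheaf: "stonean_sheaf X F res" and h: "h \<in> F (topspace X)"
    and U: "U \<in> opens X" and g: "g \<in> F U"
  shows "\<exists>f\<in>F (topspace X). res (topspace X) U f = g"
proof -
  have ps: "presheaf X F res"
    using sheaf by (simp add: stonean_sheaf_def)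
  have T: "topspace X \<in> opens X"
    using U by (rule opens_topspace)
  have U_open: "openin X U"
    using U by (simp add: opens_def)
  define V where "V = topspace X - X closure_of U"
  define I where "I = {S \<in> {U, V}. S \<noteq> {}}"
  define fs where "fs = (\<lambda>S. if S = U then g else res (topspace X) S h)"
  have UI: "U \<in> I"
    using U by (simp add: I_def opens_def)
  have dense: "dense_covering X I id (topspace X)"
    unfolding I_def V_def using U_open by (rule dense_covering_with_exterior)
  then have I_opens: "S \<in> opens X" if "S \<in> I" for S
    using that by (simp add: dense_covering_def)
  have "U \<inter> V = {}"
    using closure_of_subset[OF opens_subset_topspace[OF U]] by (auto simp: V_def)
  then have "disjoint_family_on id I"
    by (auto simp: disjoint_family_on_def I_def)
  moreover have "fs S \<in> F S" if S: "S \<in> I" for S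
  proof (cases "S = U")
    case True
    then show ?thesis
      using g by (simp add: fs_def)
  next
    case False
    then show ?thesis
      using presheaf_res_in[OF ps I_opens[OF S] T opens_subset_topspace[OF I_opens[OF S]] h]
      by (simp add: fs_def)
  qed
  ultimately have "compatible_family X F res I id fs"
    using I_opens by (simp add: compatible_family_disjoint)
  then obtain f where f: "collation X F res I id fs (topspace X) f"
    using stonean_sheaf_collation_exists[OF sheaf T dense] by blast
  then have "res (topspace X) U f = res U U g"
    using UI U opens_subset_topspace[OF U] by (simp add: collation_def fs_def)
  also have "\<dots> = g"
    using ps U g by (rule presheaf_res_id)
  finally show ?thesis
    using f by (auto simp: collation_def)
qed

theorem mainTheorem9:
  fixes X :: "'a topology" and F :: "'a set \<Rightarrow> 'b set" and res :: "'a set \<Rightarrow> 'a set \<Rightarrow> 'b \<Rightarrow> 'b"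
  assumes "stonean_sheaf X F res"
    and "F (topspace X) \<noteq> {}"
  shows "\<forall>U\<in>opens X. F U = res (topspace X) U ` F (topspace X)"
proof
  fix U assume U: "U \<in> opens X"
  obtain h where h: "h \<in> F (topspace X)"
    using assms(2) by blast
  have "res (topspace X) U ` F (topspace X) \<subseteq> F U"
    using assms(1) U opens_topspace[OF U] opens_subset_topspace[OF U]
    by (auto simp: stonean_sheaf_def presheaf_res_in)
  moreover have "F U \<subseteq> res (topspace X) U ` F (topspace X)"
    using stonean_sheaf_extends_section[OF assms(1) h U] by blast
  ultimately show "F U = res (topspace X) U ` F (topspace X)"
    by blast
qed

end
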